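(* Let $G$ be a connected graph, let $\delta$ be a real with $0<\delta<3/2$, and let $T$ be a nice shortest $\delta$-tour in $G$ that stops at at least $3$ points. Then $G$ admits a vertex cover of size at most $\ell(T)/s_\delta+1$.
   Context: Continuous graph model: for a connected simple graph $G$, each edge $uv$ is viewed as a unit-length interval whose endpoints are the vertices $u,v$. $P(G)$ is the set of all points $p(u,v,\lambda)$ for $uv\in E(G)$, $\lambda\in[0,1]$, where $p(u,v,\lambda)=p(v,u,1-\lambda)$, $p(u,v,0)=u$, $p(u,v,1)=v$. A walk is a finite sequence of points $(p_0,\dots,p_z)$ in which any two consecutive points are distinct and lie on a common edge $uv$, say $p_{i-1}=p(u,v,\lambda)$, $p_i=p(u,v,\mu)$; this step has length $|\lambda-\mu|$ and covers all points of that edge between them. The length $\ell$ of a walk is the sum of the lengths of its steps; $d(p,q)$ is the minimum length of a walk from $p$ to $q$. A tour is a walk $T=(p_0,\dots,p_z)$ with $p_0=p_z$; the points $p_0,\dots,p_z$ are its stopping points, and the points of the tour are all points covered by its steps. For $\delta\ge 0$, a $\delta$-tour is a tour $T$ such that every $p\in P(G)$ has distance at most $\delta$ from some point of $T$; a shortest $\delta$-tour is one of minimum length. $T$ traverses an edge $uv$ if $(u,v)$ or $(v,u)$ occurs as a pair of consecutive stopping points. A tour $T=(p_0,\dots,p_z)$ with $z\ge 3$ is nice if: (a) for every $i\in[z]$, at least one of $p_{i-1},p_i$ is a vertex; (b) for every $i\in[z]$ with $p_i$ not a vertex, $p_{i-1}=p_{(i+1)\bmod z}$; (c) for every edge $uv$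 there is at most one $i\in[z]$ with $p_i=p(u,v,\lambda)$ for some $\lambda\in(0,1)$; (d) if $T$ traverses $uv$, there is no $i$ with $p_i=p(u,v,\lambda)$, $\lambda\in(0,1)$; (e) every edge is traversed at most twice by $T$. $S_\delta=\{0,\ \delta-\lfloor\delta\rfloor,\ \tfrac12+\delta-\lfloor\tfrac12+\delta\rfloor,\ 2\delta-\lfloor2\delta\rfloor\}$ and $s_\delta=\min\{|s_1-s_2| : \{s_i,1-s_i\}\cap S_\delta\ne\emptyset\text{ for } i=1,2,\ s_1\notin\{s_2,1-s_2\}\}$. *)

theory Defs
  imports Complex_Main
begin

definition simple_graph :: "'a set \<Rightarrow> 'a set set \<Rightarrow> bool" where
  "simple_graph V E \<longleftrightarrow> finite V \<and>
     (\<forall>e\<in>E. \<exists>u v. e = {u, v} \<and> u \<noteq> v \<and> u \<in> V \<and> v \<in> V)"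

definition connected_graph :: "'a set \<Rightarrow> 'a set set \<Rightarrow> bool" where
  "connected_graph V E \<longleftrightarrow> V \<noteq> {} \<and>
     (\<forall>u\<in>V. \<forall>v\<in>V. (u, v) \<in> {(x, y). {x, y} \<in> E}\<^sup>*)"

definition vertex_cover :: "'a set \<Rightarrow> 'a set set \<Rightarrow> 'a set \<Rightarrow> bool" where
  "vertex_cover V E C \<longleftrightarrow> C \<subseteq> V \<and> (\<forall>e\<in>E. e \<inter> C \<noteq> {})"

text \<open>Points: a vertex, or an interior point of an edge, stored canonically as
  Mid u v l with u < v and 0 < l < 1 (meaning p(u,v,l)).\<close>
datatype 'a point = Vtx 'a | Mid 'a 'a real

definition pt :: "'a::linorder \<Rightarrow> 'a \<Rightarrow> real \<Rightarrow> 'a point" where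
  "pt u v l = (if l = 0 then Vtx u else if l = 1 then Vtx v
               else if u < v then Mid u v l else Mid v u (1 - l))"

definition points :: "'a::linorder set set \<Rightarrow> 'a point set" where
  "points E = {pt u v l | u v l. {u, v} \<in> E \<and> 0 \<le> l \<and> l \<le> 1}"

definition is_vertex :: "'a point \<Rightarrow> bool" where
  "is_vertex p \<longleftrightarrow> (\<exists>v. p = Vtx v)"

definition interior_pt :: "'a::linorder \<Rightarrow> 'a \<Rightarrow> 'a point \<Rightarrow> bool" where
  "interior_pt u v p \<longleftrightarrow> (\<exists>l. 0 < l \<and> l < 1 \<and> p = pt u v l)"

definition on_edge :: "'a::linorder set set \<Rightarrow> 'a point \<Rightarrow> 'a point \<Rightarrow> 'a \<Rightarrow> 'a \<Rightarrow> real \<Rightarrow> real \<Rightarrow> bool" where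
  "on_edge E p q u v l m \<longleftrightarrow> {u, v} \<in> E \<and> 0 \<le> l \<and> l \<le> 1 \<and> 0 \<le> m \<and> m \<le> 1
      \<and> p = pt u v l \<and> q = pt u v m"

definition step_ok :: "'a::linorder set set \<Rightarrow> 'a point \<Rightarrow> 'a point \<Rightarrow> bool" where
  "step_ok E p q \<longleftrightarrow> p \<noteq> q \<and> (\<exists>u v l m. on_edge E p q u v l m)"

text \<open>Length of a step (well defined for simple graphs).\<close>
definition step_len :: "'a::linorder set set \<Rightarrow> 'a point \<Rightarrow> 'a point \<Rightarrow> real" where
  "step_len E p q = (THE d. \<exists>u v l m. on_edge E p q u v l m \<and> d = \<bar>l - m\<bar>)"

definition step_cover :: "'a::linorder set set \<Rightarrow> 'a point \<Rightarrow> 'a point \<Rightarrow> 'a point set" where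
  "step_cover E p q = {r. \<exists>u v l m t. on_edge E p q u v l m \<and> min l m \<le> t \<and> t \<le> max l m
                              \<and> r = pt u v t}"

text \<open>A walk (p_0,...,p_z) is a nonempty list; z = length - 1.\<close>
definition walk :: "'a::linorder set set \<Rightarrow> 'a point list \<Rightarrow> bool" where
  "walk E ps \<longleftrightarrow> ps \<noteq> [] \<and> set ps \<subseteq> points E \<and>
     (\<forall>i < length ps - 1. step_ok E (ps ! i) (ps ! Suc i))"

definition wlen :: "'a::linorder set set \<Rightarrow> 'a point list \<Rightarrow> real" where
  "wlen E ps = (\<Sum>i < length ps - 1. step_len E (ps ! i) (ps ! Suc i))"

definition gdist :: "'a::linorder set set \<Rightarrow> 'a point \<Rightarrow> 'a point \<Rightarrow> real" where
  "gdist E p q = Inf {wlen E ps | ps. walk E ps \<and> hd ps = p \<and> last ps = q}"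

definition tour :: "'a::linorder set set \<Rightarrow> 'a point list \<Rightarrow> bool" where
  "tour E ps \<longleftrightarrow> walk E ps \<and> hd ps = last ps"

definition tour_points :: "'a::linorder set set \<Rightarrow> 'a point list \<Rightarrow> 'a point set" where
  "tour_points E ps = set ps \<union> (\<Union>i \<in> {..< length ps - 1}. step_cover E (ps ! i) (ps ! Suc i))"

definition delta_tour :: "'a::linorder set set \<Rightarrow> real \<Rightarrow> 'a point list \<Rightarrow> bool" where
  "delta_tour E \<delta> ps \<longleftrightarrow> tour E ps \<and>
     (\<forall>p \<in> points E. \<exists>q \<in> tour_points E ps. gdist E p q \<le> \<delta>)"

definition shortest_delta_tour :: "'a::linorder set set \<Rightarrow> real \<Rightarrow> 'a point list \<Rightarrow> bool" where
  "shortest_delta_tour E \<delta> ps \<longleftrightarrow> delta_tour E \<delta> ps \<and>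
     (\<forall>qs. delta_tour E \<delta> qs \<longrightarrow> wlen E ps \<le> wlen E qs)"

definition trav_count :: "'a point list \<Rightarrow> 'a \<Rightarrow> 'a \<Rightarrow> nat" where
  "trav_count ps u v = card {i \<in> {1..length ps - 1}.
      (ps ! (i - 1), ps ! i) = (Vtx u, Vtx v) \<or> (ps ! (i - 1), ps ! i) = (Vtx v, Vtx u)}"

definition traverses :: "'a point list \<Rightarrow> 'a \<Rightarrow> 'a \<Rightarrow> bool" where
  "traverses ps u v \<longleftrightarrow> trav_count ps u v > 0"

definition nice :: "'a::linorder set set \<Rightarrow> 'a point list \<Rightarrow> bool" where
  "nice E ps \<longleftrightarrow> tour E ps \<and> (let z = length ps - 1 in
      z \<ge> 3
    \<and> (\<forall>i \<in> {1..z}. is_vertex (ps ! (i - 1)) \<or> is_vertex (ps ! i))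
    \<and> (\<forall>i \<in> {1..z}. \<not> is_vertex (ps ! i) \<longrightarrow> ps ! (i - 1) = ps ! ((i + 1) mod z))
    \<and> (\<forall>u v. {u, v} \<in> E \<longrightarrow> card {i \<in> {1..z}. interior_pt u v (ps ! i)} \<le> 1)
    \<and> (\<forall>u v. {u, v} \<in> E \<longrightarrow> traverses ps u v \<longrightarrow> (\<forall>i \<le> z. \<not> interior_pt u v (ps ! i)))
    \<and> (\<forall>u v. {u, v} \<in> E \<longrightarrow> trav_count ps u v \<le> 2))"

definition frac_part :: "real \<Rightarrow> real" where
  "frac_part x = x - real_of_int \<lfloor>x\<rfloor>"

definition S_delta :: "real \<Rightarrow> real set" where
  "S_delta \<delta> = {0, frac_part \<delta>, frac_part (1/2 + \<delta>), frac_part (2 * \<delta>)}"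

definition s_delta :: "real \<Rightarrow> real" where
  "s_delta \<delta> = Inf {\<bar>s1 - s2\<bar> | s1 s2.
      {s1, 1 - s1} \<inter> S_delta \<delta> \<noteq> {} \<and> {s2, 1 - s2} \<inter> S_delta \<delta> \<noteq> {}
      \<and> s1 \<notin> {s2, 1 - s2}}"

end

(*
  Let W be the set of vertices at which T stops, and X the set of unvisited vertices x such that
  T stops at an interior point of an edge xy within distance \<delta> - 1/2 of x.

  W \<union> X covers every edge ab: if a, b \<notin> W, the midpoint of ab is within \<delta> of a point q of T.
  The step of T through q has a vertex end, which is visited, so its edge is not ab; a
  1-Lipschitz lower bound for the distance from the midpoint then forces that edge to be incident
  with a or b, and q to lie within \<delta> - 1/2 of that endpoint, which is therefore in X.

  For the size: by the turning condition (b) of nice tours, every visited vertex except the first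
  is first entered by a step between two vertices, of length 1; and distinct x \<in> X own distinct
  stops, each entered from the other end of its edge by a step of length at least 3/2 - \<delta>.
  Hence |W| - 1 + (3/2 - \<delta>) |X| \<le> \<ell>(T), and s_\<delta> \<le> min 1 (3/2 - \<delta>) gives the bound.
*)

theory Submission
  imports Defs
begin

section \<open>Points and steps\<close>

lemma pt_swap: "u \<noteq> v \<Longrightarrow> pt v u l = pt u v (1 - l)"
  unfolding pt_def by auto

lemma pt_eq_Vtx: "pt u v l = Vtx w \<Longrightarrow> (l = 0 \<and> w = u) \<or> (l = 1 \<and> w = v)"
  unfolding pt_def by (auto split: if_splits)

lemma is_vertex_pt: "is_vertex (pt u v l) \<longleftrightarrow> l = 0 \<or> l = 1"
  unfolding pt_def is_vertex_def by auto

lemma pt_inject: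
  assumes "u \<noteq> v" "x \<noteq> y" "0 < \<mu>" "\<mu> < 1" "pt u v m = pt x y \<mu>"
  shows "(u = x \<and> v = y \<and> m = \<mu>) \<or> (u = y \<and> v = x \<and> m = 1 - \<mu>)"
  using assms unfolding pt_def by (auto split: if_splits simp: not_less_iff_gr_or_eq)

lemma pt_inj: "u \<noteq> v \<Longrightarrow> pt u v l = pt u v m \<Longrightarrow> l = m"
  unfolding pt_def by (auto split: if_splits)

lemma pt_in_points: "{u, v} \<in> E \<Longrightarrow> 0 \<le> l \<Longrightarrow> l \<le> 1 \<Longrightarrow> pt u v l \<in> points E"
  unfolding points_def by blast

lemma edge_endpoints:
  assumes "simple_graph V E" "{u, v} \<in> E"
  shows "u \<noteq> v" "u \<in> V" "v \<in> V"
proof -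
  obtain x y where "{u, v} = {x, y}" "x \<noteq> y" "x \<in> V" "y \<in> V"
    using assms unfolding simple_graph_def by blast
  then show "u \<noteq> v" "u \<in> V" "v \<in> V"
    by (auto simp: doubleton_eq_iff)
qed

lemma on_edge_swap:
  assumes "on_edge E p q u v l m" "u \<noteq> v"
  shows "on_edge E p q v u (1 - l) (1 - m)"
proof -
  have "{v, u} = {u, v}" by blast
  then show ?thesis
    using assms pt_swap[OF assms(2)] unfolding on_edge_def by auto
qed

lemma on_edge_converse: "on_edge E p q u v l m \<Longrightarrow> on_edge E q p u v m l"
  unfolding on_edge_def by auto

lemma on_edge_interior_length:
  assumes sg: "simple_graph V E"
    and oe: "on_edge E p q u v l m" and oe': "on_edge E p q u' v' l' m'"
    and l: "0 < l" "l < 1"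
  shows "\<bar>l - m\<bar> = \<bar>l' - m'\<bar>"
proof -
  have uv: "u \<noteq> v" and uv': "u' \<noteq> v'"
    using oe oe' edge_endpoints(1)[OF sg] unfolding on_edge_def by auto
  have "pt u' v' l' = pt u v l" "pt u' v' m' = pt u v m"
    using oe oe' unfolding on_edge_def by auto
  from pt_inject[OF uv' uv l this(1)] this(2)
  consider "u' = u" "v' = v" "l' = l" "pt u v m' = pt u v m"
    | "u' = v" "v' = u" "l' = 1 - l" "pt u v (1 - m') = pt u v m"
    using pt_swap[OF uv] by auto
  then show ?thesis
    by cases (auto dest: pt_inj[OF uv])
qed

lemma step_len_eq:
  assumes sg: "simple_graph V E" and oe: "on_edge E p q u v l m" and ne: "p \<noteq> q"
  shows "step_len E p q = \<bar>l - m\<bar>"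
  unfolding step_len_def
proof (rule the_equality)
  show "\<exists>u' v' l' m'. on_edge E p q u' v' l' m' \<and> \<bar>l - m\<bar> = \<bar>l' - m'\<bar>"
    using oe by blast
next
  fix d assume "\<exists>u' v' l' m'. on_edge E p q u' v' l' m' \<and> d = \<bar>l' - m'\<bar>"
  then obtain u' v' l' m' where oe': "on_edge E p q u' v' l' m'" and d: "d = \<bar>l' - m'\<bar>"
    by blast
  have ranges: "0 \<le> l" "l \<le> 1" "0 \<le> m" "m \<le> 1" "0 \<le> l'" "l' \<le> 1" "0 \<le> m'" "m' \<le> 1"
    using oe oe' unfolding on_edge_def by auto
  show "d = \<bar>l - m\<bar>"
  proof (cases "0 < l \<and> l < 1 \<or> 0 < m \<and> m < 1")
    case True
    then show ?thesis
      using on_edge_interior_length[OF sg oe oe'] d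
        on_edge_interior_length[OF sg on_edge_converse[OF oe] on_edge_converse[OF oe']]
      by (auto simp: abs_minus_commute)
  next
    case False
    then have "is_vertex p" "is_vertex q"
      using oe ranges unfolding on_edge_def by (auto simp: is_vertex_pt)
    then have "is_vertex (pt u' v' l')" "is_vertex (pt u' v' m')"
      using oe' unfolding on_edge_def by auto
    moreover have "l \<noteq> m" "l' \<noteq> m'"
      using ne oe oe' unfolding on_edge_def by auto
    ultimately show ?thesis
      using False ranges d by (auto simp: is_vertex_pt)
  qed
qed

lemma step_len_nonneg: "simple_graph V E \<Longrightarrow> step_ok E p q \<Longrightarrow> 0 \<le> step_len E p q"
  unfolding step_ok_def using step_len_eq by fastforce

lemma step_len_vertices:
  assumes sg: "simple_graph V E" and st: "step_ok E p q" and "is_vertex p" "is_vertex q"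
  shows "step_len E p q = 1"
proof -
  obtain u v l m where oe: "on_edge E p q u v l m" and ne: "p \<noteq> q"
    using st unfolding step_ok_def by blast
  have "l = 0 \<or> l = 1" "m = 0 \<or> m = 1" "l \<noteq> m"
    using assms oe ne unfolding on_edge_def by (auto simp: is_vertex_pt)
  then show ?thesis
    using step_len_eq[OF sg oe ne] by auto
qed

lemma step_len_vertex_interior:
  assumes sg: "simple_graph V E" and st: "step_ok E (Vtx w) q"
    and e: "{x, y} \<in> E" and \<mu>: "0 < \<mu>" "\<mu> < 1" and q: "q = pt x y \<mu>"
  shows "(w = x \<and> step_len E (Vtx w) q = \<mu>) \<or> (w = y \<and> step_len E (Vtx w) q = 1 - \<mu>)"
proof -
  obtain u v l m where oe: "on_edge E (Vtx w) q u v l m" and ne: "Vtx w \<noteq> q"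
    using st unfolding step_ok_def by blast
  have uv: "u \<noteq> v" and xy: "x \<noteq> y"
    using oe e edge_endpoints(1)[OF sg] unfolding on_edge_def by auto
  have "pt u v m = pt x y \<mu>"
    using oe q unfolding on_edge_def by simp
  from pt_inject[OF uv xy \<mu> this]
  have "on_edge E (Vtx w) q x y l \<mu> \<or> on_edge E (Vtx w) q x y (1 - l) \<mu>"
    using oe on_edge_swap[OF oe uv] by auto
  then obtain l' where oe': "on_edge E (Vtx w) q x y l' \<mu>"
    by blast
  then have "pt x y l' = Vtx w"
    unfolding on_edge_def by auto
  then show ?thesis
    using pt_eq_Vtx[of x y l' w] step_len_eq[OF sg oe' ne] \<mu> by auto
qed

section \<open>Walks\<close>

lemma walk_potential_bound:
  assumes lip: "\<And>p q. step_ok E p q \<Longrightarrow> f q \<le> f p + step_len E p q"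
    and w: "walk E ps"
  shows "f (last ps) \<le> f (hd ps) + wlen E ps"
proof -
  have "f (ps ! i) \<le> f (ps ! 0) + (\<Sum>j<i. step_len E (ps ! j) (ps ! Suc j))"
    if "i < length ps" for i
    using that
  proof (induction i)
    case (Suc i)
    then have "step_ok E (ps ! i) (ps ! Suc i)"
      using w unfolding walk_def by auto
    with Suc show ?case
      using lip by fastforce
  qed simp
  moreover have "ps \<noteq> []"
    using w unfolding walk_def by simp
  ultimately show ?thesis
    by (simp add: wlen_def hd_conv_nth last_conv_nth)
qed

lemma gdist_ge_potential_diff:
  assumes lip: "\<And>p q. step_ok E p q \<Longrightarrow> f q \<le> f p + step_len E p q"
    and w: "walk E ps" "hd ps = p" "last ps = q"
  shows "f q - f p \<le> gdist E p q"
  unfolding gdist_def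
proof (rule cInf_greatest)
  show "{wlen E ps |ps. walk E ps \<and> hd ps = p \<and> last ps = q} \<noteq> {}"
    using w by blast
next
  fix d assume "d \<in> {wlen E ps |ps. walk E ps \<and> hd ps = p \<and> last ps = q}"
  then show "f q - f p \<le> d"
    using walk_potential_bound[OF lip] by fastforce
qed

lemma walk_snoc:
  assumes "walk E ps" "step_ok E (last ps) r" "r \<in> points E"
  shows "walk E (ps @ [r])"
proof -
  have ne: "ps \<noteq> []"
    using assms unfolding walk_def by auto
  have "step_ok E ((ps @ [r]) ! i) ((ps @ [r]) ! Suc i)" if "i < length ps" for i
  proof (cases "Suc i < length ps")
    case True
    then show ?thesis
      using assms(1) unfolding walk_def by (auto simp: nth_append)
  next
    case False
    then have "i = length ps - 1"
      using that by simp
    then show ?thesis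
      using assms(2) ne by (simp add: nth_append last_conv_nth)
  qed
  then show ?thesis
    using assms ne unfolding walk_def by auto
qed

lemma walk_extend_along_edge:
  assumes "walk E ps" "last ps = Vtx u" "{u, v} \<in> E" "0 \<le> t" "t \<le> 1"
  shows "\<exists>ps'. walk E ps' \<and> hd ps' = hd ps \<and> last ps' = pt u v t"
proof (cases "pt u v t = Vtx u")
  case True
  then show ?thesis
    using assms by metis
next
  case False
  have "on_edge E (Vtx u) (pt u v t) u v 0 t"
    using assms unfolding on_edge_def by (simp add: pt_def)
  then have "step_ok E (last ps) (pt u v t)"
    using False assms(2) unfolding step_ok_def by auto
  then have "walk E (ps @ [pt u v t])"
    using walk_snoc assms pt_in_points by blast
  moreover have "ps \<noteq> []"
    using assms unfolding walk_def by simp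
  ultimately show ?thesis
    by (intro exI[of _ "ps @ [pt u v t]"]) simp
qed

lemma walk_extend_along_path:
  assumes sg: "simple_graph V E" and path: "(x, y) \<in> {(x, y). {x, y} \<in> E}\<^sup>*"
    and w: "walk E ps" "last ps = Vtx x"
  shows "\<exists>ps'. walk E ps' \<and> hd ps' = hd ps \<and> last ps' = Vtx y"
  using path
proof (induction rule: rtrancl_induct)
  case base
  then show ?case
    using w by blast
next
  case (step y z)
  then obtain ps' where "walk E ps'" "hd ps' = hd ps" "last ps' = Vtx y"
    by blast
  with walk_extend_along_edge[of E ps' y z 1] step(2) show ?case
    by (auto simp: pt_def)
qed

lemma walk_to_endpoint:
  assumes "{u, v} \<in> E" "0 \<le> l" "l \<le> 1"
  shows "\<exists>ps. walk E ps \<and> hd ps = pt u v l \<and> last ps = Vtx u"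
proof (cases "pt u v l = Vtx u")
  case True
  then show ?thesis
    using assms pt_in_points[OF assms] unfolding walk_def
    by (intro exI[of _ "[pt u v l]"]) simp
next
  case False
  have "on_edge E (pt u v l) (Vtx u) u v l 0"
    using assms unfolding on_edge_def by (simp add: pt_def)
  then have "step_ok E (pt u v l) (Vtx u)"
    using False unfolding step_ok_def by auto
  moreover have "Vtx u \<in> points E"
    using pt_in_points[OF assms(1), of 0] by (simp add: pt_def)
  ultimately have "walk E [pt u v l, Vtx u]"
    using pt_in_points[OF assms] unfolding walk_def by (auto simp: less_Suc_eq)
  then show ?thesis
    by fastforce
qed

lemma walk_between_points:
  assumes sg: "simple_graph V E" and conn: "connected_graph V E"
    and p: "p \<in> points E" and q: "q \<in> points E"
  shows "\<exists>ps. walk E ps \<and> hd ps = p \<and> last ps = q"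
proof -
  obtain a b l where ab: "{a, b} \<in> E" "0 \<le> l" "l \<le> 1" "p = pt a b l"
    using p unfolding points_def by blast
  obtain c d t where cd: "{c, d} \<in> E" "0 \<le> t" "t \<le> 1" "q = pt c d t"
    using q unfolding points_def by blast
  have "(a, c) \<in> {(x, y). {x, y} \<in> E}\<^sup>*"
    using conn edge_endpoints[OF sg ab(1)] edge_endpoints[OF sg cd(1)]
    unfolding connected_graph_def by blast
  moreover obtain ps where "walk E ps" "hd ps = p" "last ps = Vtx a"
    using walk_to_endpoint[OF ab(1-3)] ab(4) by blast
  ultimately obtain ps' where "walk E ps'" "hd ps' = p" "last ps' = Vtx c"
    using walk_extend_along_path[OF sg] by metis
  then show ?thesis
    using walk_extend_along_edge[OF _ _ cd(1-3)] cd(4) by metis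
qed

section \<open>Distance from the midpoint of an edge\<close>

text \<open>A lower bound, truncated at 3/2, for the distance from the midpoint of the edge ab
  to the point at parameter t on the edge uv.\<close>
definition mid_potential_on :: "'a \<Rightarrow> 'a \<Rightarrow> 'a \<Rightarrow> 'a \<Rightarrow> real \<Rightarrow> real" where
  "mid_potential_on a b u v t =
     (if {u, v} = {a, b} then \<bar>t - 1/2\<bar> else if u \<in> {a, b} then 1/2 + t
      else if v \<in> {a, b} then 3/2 - t else 3/2)"

definition mid_potential :: "'a \<Rightarrow> 'a \<Rightarrow> 'a point \<Rightarrow> real" where
  "mid_potential a b p =
     (case p of Vtx w \<Rightarrow> if w \<in> {a, b} then 1/2 else 3/2 | Mid u v t \<Rightarrow> mid_potential_on a b u v t)"

lemma mid_potential_pt: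
  assumes "a \<noteq> b" "u \<noteq> v" "0 \<le> t" "t \<le> 1"
  shows "mid_potential a b (pt u v t) = mid_potential_on a b u v t"
proof -
  consider "t = 0" | "t = 1" | "0 < t" "t < 1" "u < v" | "0 < t" "t < 1" "\<not> u < v"
    using assms by linarith
  then show ?thesis
    by cases (use assms in \<open>auto simp: pt_def mid_potential_def mid_potential_on_def doubleton_eq_iff\<close>)
qed

lemma mid_potential_step:
  assumes sg: "simple_graph V E" and ab: "a \<noteq> b" and st: "step_ok E p q"
  shows "mid_potential a b q \<le> mid_potential a b p + step_len E p q"
proof -
  obtain u v l m where oe: "on_edge E p q u v l m" and ne: "p \<noteq> q"
    using st unfolding step_ok_def by blast
  then have uv: "u \<noteq> v"
    using edge_endpoints(1)[OF sg] unfolding on_edge_def by blast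
  have "\<bar>mid_potential_on a b u v l - mid_potential_on a b u v m\<bar> \<le> \<bar>l - m\<bar>"
    unfolding mid_potential_on_def by (simp add: abs_if)
  then show ?thesis
    using oe step_len_eq[OF sg oe ne] mid_potential_pt[OF ab uv] unfolding on_edge_def by auto
qed

lemma mid_potential_le_gdist:
  assumes sg: "simple_graph V E" and conn: "connected_graph V E"
    and ab: "{a, b} \<in> E" and uv: "{u, v} \<in> E" and t: "0 \<le> t" "t \<le> 1"
  shows "mid_potential_on a b u v t \<le> gdist E (pt a b (1/2)) (pt u v t)"
proof -
  have a_ne_b: "a \<noteq> b" and u_ne_v: "u \<noteq> v"
    using edge_endpoints(1)[OF sg] ab uv by auto
  have "pt a b (1/2) \<in> points E"
    using pt_in_points[OF ab] by simp
  then obtain ps where "walk E ps" "hd ps = pt a b (1/2)" "last ps = pt u v t"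
    using walk_between_points[OF sg conn _ pt_in_points[OF uv t]] by blast
  then have "mid_potential a b (pt u v t) - mid_potential a b (pt a b (1/2))
      \<le> gdist E (pt a b (1/2)) (pt u v t)"
    using gdist_ge_potential_diff[where f = "mid_potential a b", OF mid_potential_step[OF sg a_ne_b]]
    by blast
  then show ?thesis
    using mid_potential_pt[OF a_ne_b u_ne_v t] mid_potential_pt[OF a_ne_b a_ne_b, of "1/2"]
    by (simp add: mid_potential_on_def)
qed

section \<open>The constant s_delta\<close>

definition s_delta_gaps :: "real \<Rightarrow> real set" where
  "s_delta_gaps \<delta> = {\<bar>s1 - s2\<bar> | s1 s2.
      {s1, 1 - s1} \<inter> S_delta \<delta> \<noteq> {} \<and> {s2, 1 - s2} \<inter> S_delta \<delta> \<noteq> {}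
      \<and> s1 \<notin> {s2, 1 - s2}}"

lemma s_delta_Inf_gaps: "s_delta \<delta> = Inf (s_delta_gaps \<delta>)"
  unfolding s_delta_def s_delta_gaps_def ..

lemma finite_s_delta_gaps: "finite (s_delta_gaps \<delta>)"
proof -
  define K where "K = S_delta \<delta> \<union> (\<lambda>x. 1 - x) ` S_delta \<delta>"
  have "finite K"
    unfolding K_def S_delta_def by simp
  moreover have "s_delta_gaps \<delta> \<subseteq> (\<lambda>(x, y). \<bar>x - y\<bar>) ` (K \<times> K)"
  proof
    fix d assume "d \<in> s_delta_gaps \<delta>"
    then obtain s1 s2 where "d = \<bar>s1 - s2\<bar>" "{s1, 1 - s1} \<inter> S_delta \<delta> \<noteq> {}"
        "{s2, 1 - s2} \<inter> S_delta \<delta> \<noteq> {}"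
      unfolding s_delta_gaps_def by blast
    moreover have "s \<in> K" if "{s, 1 - s} \<inter> S_delta \<delta> \<noteq> {}" for s
      using that image_eqI[of s "\<lambda>x. 1 - x" "1 - s"] unfolding K_def by auto
    ultimately show "d \<in> (\<lambda>(x, y). \<bar>x - y\<bar>) ` (K \<times> K)"
      by force
  qed
  ultimately show ?thesis
    by (meson finite_SigmaI finite_imageI finite_subset)
qed

lemma s_delta_gap_witness:
  assumes "0 < \<delta>" "\<delta> < 3/2"
  obtains d where "d \<in> s_delta_gaps \<delta>" "d \<le> 1" "d \<le> 3/2 - \<delta>"
proof (cases "\<delta> = 1/2")
  case True
  then have "frac_part \<delta> = 1/2"
    unfolding frac_part_def by (simp add: floor_eq_iff)
  then have "\<bar>0 - 1/2\<bar> \<in> s_delta_gaps \<delta>"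
    unfolding s_delta_gaps_def S_delta_def by (intro CollectI exI[of _ 0] exI[of _ "1/2"]) auto
  with True show ?thesis
    using that by simp
next
  case False
  define f where "f = frac_part (1/2 + \<delta>)"
  have "\<lfloor>1/2 + \<delta>\<rfloor> = (if \<delta> < 1/2 then 0 else 1)"
    using assms False by (simp add: floor_eq_iff)
  then have f: "0 < f" "f < 1" "\<delta> - 1/2 \<le> f"
    using assms False unfolding f_def frac_part_def by (auto split: if_splits)
  \<comment> \<open>both 0 and 1 - f are represented in S_delta; f vanishes only for \<delta> = 1/2\<close>
  have "\<bar>0 - (1 - f)\<bar> \<in> s_delta_gaps \<delta>"
    unfolding s_delta_gaps_def S_delta_def f_def[symmetric] using f
    by (intro CollectI exI[of _ 0] exI[of _ "1 - f"]) auto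
  then show ?thesis
    using that f by simp
qed

lemma s_delta_bounds:
  assumes "0 < \<delta>" "\<delta> < 3/2"
  shows "0 < s_delta \<delta>" "s_delta \<delta> \<le> 1" "s_delta \<delta> \<le> 3/2 - \<delta>"
proof -
  obtain d where d: "d \<in> s_delta_gaps \<delta>" "d \<le> 1" "d \<le> 3/2 - \<delta>"
    using s_delta_gap_witness[OF assms] .
  have ne: "s_delta_gaps \<delta> \<noteq> {}"
    using d(1) by blast
  then have "s_delta \<delta> = Min (s_delta_gaps \<delta>)"
    by (simp add: s_delta_Inf_gaps cInf_eq_Min finite_s_delta_gaps)
  moreover have "0 < g" if "g \<in> s_delta_gaps \<delta>" for g
    using that unfolding s_delta_gaps_def by auto
  moreover have "Min (s_delta_gaps \<delta>) \<in> s_delta_gaps \<delta>" "Min (s_delta_gaps \<delta>) \<le> d"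
    using d(1) ne finite_s_delta_gaps by auto
  ultimately show "0 < s_delta \<delta>" "s_delta \<delta> \<le> 1" "s_delta \<delta> \<le> 3/2 - \<delta>"
    using d by auto
qed

section \<open>Nice tours\<close>

locale nice_tour =
  fixes V :: "'a::linorder set" and E :: "'a set set" and T :: "'a point list"
  assumes simple: "simple_graph V E" and nice_T: "nice E T"
begin

definition z :: nat where
  "z = length T - 1"

text \<open>As in the definition of nice tours, step i of T goes from T ! (i - 1) to T ! i, for
  i \<in> {1..z}.\<close>

lemma
  shows tour_T: "tour E T"
    and z_ge_3: "3 \<le> z"
    and step_has_vertex: "i \<in> {1..z} \<Longrightarrow> is_vertex (T ! (i - 1)) \<or> is_vertex (T ! i)"
    and interior_stop_returns:
      "i \<in> {1..z} \<Longrightarrow> \<not> is_vertex (T ! i) \<Longrightarrow> T ! (i - 1) = T ! ((i + 1) mod z)"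
  using nice_T unfolding nice_def Let_def z_def by auto

lemma length_T: "length T = Suc z"
  using tour_T z_ge_3 unfolding z_def by simp

lemma first_stop_eq_last: "T ! 0 = T ! z"
proof -
  have "T \<noteq> []" "hd T = last T"
    using tour_T unfolding tour_def walk_def by auto
  then show ?thesis
    using length_T by (simp add: hd_conv_nth last_conv_nth)
qed

lemma stop_in_set: "i \<le> z \<Longrightarrow> T ! i \<in> set T"
  using length_T by simp

lemma step_ok_stops:
  assumes "i \<in> {1..z}"
  shows "step_ok E (T ! (i - 1)) (T ! i)"
proof -
  have "\<forall>k < z. step_ok E (T ! k) (T ! Suc k)"
    using tour_T unfolding tour_def walk_def z_def by blast
  then show ?thesis
    using assms by (auto dest: spec[of _ "i - 1"])
qed

lemma wlen_T: "wlen E T = (\<Sum>i = 1..z. step_len E (T ! (i - 1)) (T ! i))"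
  unfolding wlen_def z_def[symmetric]
  using sum.atLeast1_atMost_eq[of "\<lambda>i. step_len E (T ! (i - 1)) (T ! i)" z] by simp

lemma interior_stop_turns:
  assumes "i \<in> {1..<z}" "\<not> is_vertex (T ! i)"
  shows "T ! (i - 1) = T ! Suc i"
proof -
  have "T ! ((i + 1) mod z) = T ! Suc i"
    using assms(1) first_stop_eq_last by (cases "Suc i = z") auto
  then show ?thesis
    using interior_stop_returns assms by auto
qed

definition visited :: "'a set" where
  "visited = {w. Vtx w \<in> set T}"

definition vertex_steps :: "nat set" where
  "vertex_steps = {i \<in> {1..z}. is_vertex (T ! (i - 1)) \<and> is_vertex (T ! i)}"

definition approaches :: "real \<Rightarrow> 'a \<Rightarrow> nat \<Rightarrow> bool" where
  "approaches r x i \<longleftrightarrow> i \<in> {1..z} \<and>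
     (\<exists>y \<mu>. {x, y} \<in> E \<and> 0 < \<mu> \<and> \<mu> < 1 \<and> \<mu> \<le> r \<and> T ! i = pt x y \<mu>)"

definition approached :: "real \<Rightarrow> 'a set" where
  "approached r = {x. x \<notin> visited \<and> (\<exists>i. approaches r x i)}"

definition approach_steps :: "real \<Rightarrow> nat set" where
  "approach_steps r = {i. \<exists>x. x \<notin> visited \<and> approaches r x i}"

lemma visited_subset: "visited \<subseteq> V"
proof
  fix w assume "w \<in> visited"
  then have "Vtx w \<in> points E"
    using tour_T unfolding visited_def tour_def walk_def by auto
  then obtain u v l where uv: "{u, v} \<in> E" "pt u v l = Vtx w"
    unfolding points_def by auto
  then show "w \<in> V"
    using pt_eq_Vtx[OF uv(2)] edge_endpoints(2,3)[OF simple uv(1)] by auto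
qed

lemma approached_subset: "approached r \<subseteq> V"
  unfolding approached_def approaches_def using edge_endpoints(2)[OF simple] by blast

lemma visited_vertex_step:
  assumes "w \<in> visited" "T ! 0 \<noteq> Vtx w" "\<not> is_vertex (T ! 0) \<Longrightarrow> T ! 1 \<noteq> Vtx w"
  shows "\<exists>i \<in> vertex_steps. T ! i = Vtx w"
proof -
  let ?visit = "\<lambda>i. i \<in> {1..z} \<and> T ! i = Vtx w"
  obtain j where "j < length T" "T ! j = Vtx w"
    using assms(1) unfolding visited_def by (auto simp: in_set_conv_nth)
  then have "?visit (if j = 0 then z else j)"
    using assms(2) length_T first_stop_eq_last z_ge_3 by (cases "j = 0") auto
  \<comment> \<open>the first visit of w is entered from a vertex\<close>
  define i where "i = (LEAST i. ?visit i)"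
  have i: "?visit i"
    unfolding i_def by (rule LeastI) fact
  have "is_vertex (T ! (i - 1))"
  proof (rule ccontr)
    assume nv: "\<not> is_vertex (T ! (i - 1))"
    then have "i \<noteq> 1"
      using assms(3) i by auto
    then have "i - 1 \<in> {1..<z}" "i - 1 - 1 = i - 2" "Suc (i - 1) = i"
      using i by auto
    then have "T ! (i - 2) = Vtx w"
      using interior_stop_turns[of "i - 1"] nv i by metis
    moreover have "\<not> ?visit (i - 2)"
      using i \<open>i \<noteq> 1\<close> unfolding i_def by (intro not_less_Least) auto
    ultimately show False
      using assms(2) i \<open>i \<noteq> 1\<close> by (cases "i = 2") auto
  qed
  then show ?thesis
    using i unfolding vertex_steps_def is_vertex_def by auto
qed

lemma card_visited_le: "card visited \<le> card vertex_steps + 1"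
proof -
  obtain w0 where w0: "T ! 0 = Vtx w0 \<or> (\<not> is_vertex (T ! 0) \<and> T ! 1 = Vtx w0)"
    using step_has_vertex[of 1] z_ge_3 unfolding is_vertex_def by auto
  have "visited - {w0} \<subseteq> (\<lambda>i. inv Vtx (T ! i)) ` vertex_steps"
  proof
    fix w assume w: "w \<in> visited - {w0}"
    then have "T ! 0 \<noteq> Vtx w" "\<not> is_vertex (T ! 0) \<Longrightarrow> T ! 1 \<noteq> Vtx w"
      using w0 unfolding is_vertex_def by auto
    then obtain i where i: "i \<in> vertex_steps" "T ! i = Vtx w"
      using visited_vertex_step[OF DiffD1[OF w]] by blast
    have "inv Vtx (Vtx w) = w"
      by (rule inv_f_f) (simp add: inj_def)
    with i show "w \<in> (\<lambda>i. inv Vtx (T ! i)) ` vertex_steps"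
      by (intro image_eqI[where x = i]) simp_all
  qed
  moreover have fin: "finite vertex_steps"
    unfolding vertex_steps_def by simp
  ultimately have "card (visited - {w0}) \<le> card ((\<lambda>i. inv Vtx (T ! i)) ` vertex_steps)"
    by (intro card_mono finite_imageI)
  also have "\<dots> \<le> card vertex_steps"
    using fin by (rule card_image_le)
  finally show ?thesis
    using card_Diff_singleton_if[of visited w0] by (auto split: if_splits)
qed

lemma step_to_interior_stop:
  assumes "x \<notin> visited" "i \<in> {1..z}" "{x, y} \<in> E" "0 < \<mu>" "\<mu> < 1" "T ! i = pt x y \<mu>"
  shows "T ! (i - 1) = Vtx y" "step_len E (T ! (i - 1)) (T ! i) = 1 - \<mu>"
proof -
  have "\<not> is_vertex (T ! i)"
    using assms by (simp add: is_vertex_pt)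
  then obtain w where w: "T ! (i - 1) = Vtx w"
    using step_has_vertex assms(2) unfolding is_vertex_def by blast
  then have "w \<in> visited"
    using stop_in_set[of "i - 1"] assms(2) unfolding visited_def by auto
  then have "w \<noteq> x"
    using assms(1) by blast
  then show "T ! (i - 1) = Vtx y" "step_len E (T ! (i - 1)) (T ! i) = 1 - \<mu>"
    using step_len_vertex_interior[OF simple _ assms(3-6)] step_ok_stops[OF assms(2)] w by auto
qed

lemma approaches_unique:
  assumes "x \<notin> visited" "x' \<notin> visited" "approaches r x i" "approaches r' x' i"
  shows "x' = x"
proof -
  obtain y \<mu> where i: "i \<in> {1..z}" and y: "{x, y} \<in> E" "0 < \<mu>" "\<mu> < 1" "T ! i = pt x y \<mu>"
    using assms(3) unfolding approaches_def by blast
  obtain y' \<mu>' where y': "{x', y'} \<in> E" "0 < \<mu>'" "\<mu>' < 1" "T ! i = pt x' y' \<mu>'"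
    using assms(4) unfolding approaches_def by blast
  have "Vtx y' = Vtx y"
    using step_to_interior_stop(1)[OF assms(1) i y] step_to_interior_stop(1)[OF assms(2) i y'] by simp
  moreover have "y \<in> visited"
    using step_to_interior_stop(1)[OF assms(1) i y] stop_in_set[of "i - 1"] i
    unfolding visited_def by auto
  moreover have "(x' = x \<and> y' = y) \<or> (x' = y \<and> y' = x)"
    using pt_inject[OF edge_endpoints(1)[OF simple y'(1)] edge_endpoints(1)[OF simple y(1)] y(2,3)]
      y(4) y'(4) by auto
  ultimately show ?thesis
    using assms(2) by auto
qed

lemma card_approached_le: "card (approached r) \<le> card (approach_steps r)"
proof -
  define first where "first x = (SOME i. approaches r x i)" for x
  have first: "approaches r x (first x)" if "x \<in> approached r" for x
    using that unfolding approached_def first_def by (blast intro: someI)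
  have "inj_on first (approached r)"
    by (rule inj_onI) (metis first approaches_unique approached_def mem_Collect_eq)
  moreover have "first ` approached r \<subseteq> approach_steps r"
    using first unfolding approached_def approach_steps_def by blast
  moreover have "finite (approach_steps r)"
    by (rule finite_subset[of _ "{1..z}"]) (auto simp: approach_steps_def approaches_def)
  ultimately show ?thesis
    by (rule card_inj_on_le)
qed

lemma wlen_lower_bound:
  assumes "r \<le> 1"
  shows "real (card vertex_steps) + real (card (approached r)) * (1 - r) \<le> wlen E T"
proof -
  let ?len = "\<lambda>i. step_len E (T ! (i - 1)) (T ! i)"
  have approach_step: "\<not> is_vertex (T ! i) \<and> 1 - r \<le> ?len i"
    if i: "i \<in> approach_steps r" for i
  proof -
    obtain x y \<mu> where "x \<notin> visited" "i \<in> {1..z}" "{x, y} \<in> E" "0 < \<mu>" "\<mu> < 1" "\<mu> \<le> r"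
        "T ! i = pt x y \<mu>"
      using i unfolding approach_steps_def approaches_def by blast
    then show ?thesis
      using step_to_interior_stop(2) by (simp add: is_vertex_pt)
  qed
  have sub: "vertex_steps \<subseteq> {1..z}" "approach_steps r \<subseteq> {1..z}"
    unfolding vertex_steps_def approach_steps_def approaches_def by auto
  then have fin: "finite vertex_steps" "finite (approach_steps r)"
    by (auto intro: finite_subset)
  have "real (card (approached r)) * (1 - r) \<le> real (card (approach_steps r)) * (1 - r)"
    using card_approached_le assms by (intro mult_right_mono) auto
  also have "\<dots> \<le> (\<Sum>i \<in> approach_steps r. ?len i)"
    using approach_step by (intro sum_bounded_below) auto
  finally have "real (card vertex_steps) + real (card (approached r)) * (1 - r)
      \<le> (\<Sum>i \<in> vertex_steps. ?len i) + (\<Sum>i \<in> approach_steps r. ?len i)"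
    using step_len_vertices[OF simple step_ok_stops] sub(1) unfolding vertex_steps_def by auto
  also have "\<dots> = (\<Sum>i \<in> vertex_steps \<union> approach_steps r. ?len i)"
    using fin approach_step unfolding vertex_steps_def by (intro sum.union_disjoint[symmetric]) auto
  also have "\<dots> \<le> (\<Sum>i = 1..z. ?len i)"
    using sub step_len_nonneg[OF simple step_ok_stops] by (intro sum_mono2) auto
  finally show ?thesis
    by (simp add: wlen_T)
qed

lemma tour_point_on_step:
  assumes "q \<in> tour_points E T"
  obtains j u v l m t where "j < z" "on_edge E (T ! j) (T ! Suc j) u v l m"
    "min l m \<le> t" "t \<le> max l m" "q = pt u v t"
proof -
  consider "q \<in> set T" | j where "j < z" "q \<in> step_cover E (T ! j) (T ! Suc j)"
    using assms unfolding tour_points_def z_def by auto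
  then show ?thesis
  proof cases
    case 1
    then obtain k where k: "k \<le> z" "T ! k = q"
      using length_T by (auto simp: in_set_conv_nth less_Suc_eq_le)
    define j where "j = (if k = z then 0 else k)"
    have j: "j < z" "T ! j = q"
      using k z_ge_3 first_stop_eq_last unfolding j_def by auto
    then obtain u v l m where oe: "on_edge E (T ! j) (T ! Suc j) u v l m"
      using step_ok_stops[of "Suc j"] unfolding step_ok_def by auto
    then have "q = pt u v l"
      using j unfolding on_edge_def by simp
    with that j oe show ?thesis
      by (metis order.refl max.cobounded1 min.cobounded1)
  next
    case 2
    then show ?thesis
      using that unfolding step_cover_def by blast
  qed
qed

lemma step_edge_visited:
  assumes "j < z" "on_edge E (T ! j) (T ! Suc j) u v l m"
  shows "u \<in> visited \<or> v \<in> visited"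
proof -
  obtain k where "k \<in> {j, Suc j}" "is_vertex (T ! k)"
    using step_has_vertex[of "Suc j"] assms(1) by auto
  moreover have "T ! k \<in> {pt u v l, pt u v m}" "T ! k \<in> set T" if "k \<in> {j, Suc j}" for k
    using that assms stop_in_set[of k] unfolding on_edge_def by auto
  ultimately show ?thesis
    unfolding visited_def is_vertex_def by (metis empty_iff insert_iff pt_eq_Vtx mem_Collect_eq)
qed

lemma unvisited_end_approached:
  assumes j: "j < z" and oe: "on_edge E (T ! j) (T ! Suc j) u v l m"
    and t: "min l m \<le> t" "t \<le> max l m" "t \<le> r" and u: "u \<notin> visited"
  shows "u \<in> approached r"
proof -
  have e: "{u, v} \<in> E" and p: "T ! j = pt u v l" "T ! Suc j = pt u v m"
    and ranges: "0 \<le> l" "l \<le> 1" "0 \<le> m" "m \<le> 1"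
    using oe unfolding on_edge_def by auto
  have "l \<noteq> 0" "m \<noteq> 0"
    using u p stop_in_set[of j] stop_in_set[of "Suc j"] j unfolding visited_def pt_def by auto
  moreover have "l \<noteq> m"
    using step_ok_stops[of "Suc j"] p j unfolding step_ok_def by auto
  moreover have "is_vertex (pt u v l) \<or> is_vertex (pt u v m)"
    using step_has_vertex[of "Suc j"] p j by auto
  \<comment> \<open>the step leaves from v, or arrives at v, the other stop being interior to the edge\<close>
  ultimately consider "l = 1" "0 < m" "m < 1" | "m = 1" "0 < l" "l < 1"
    using ranges by (auto simp: is_vertex_pt)
  then have "\<exists>i. approaches r u i"
  proof cases
    case 1
    have "approaches r u (Suc j)"
      using 1 j e p t unfolding approaches_def by (auto intro!: exI[of _ v] exI[of _ m])
    then show ?thesis ..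
  next
    case 2
    have "T ! (if j = 0 then z else j) = T ! j"
      using first_stop_eq_last by simp
    then have "approaches r u (if j = 0 then z else j)"
      using 2 j e p t z_ge_3 unfolding approaches_def by (auto intro!: exI[of _ v] exI[of _ l])
    then show ?thesis ..
  qed
  with u show ?thesis
    unfolding approached_def by blast
qed

lemma edge_meets_approached:
  assumes dt: "delta_tour E \<delta> T" and conn: "connected_graph V E" and \<delta>: "\<delta> < 3/2"
    and ab: "{a, b} \<in> E" and unvisited: "a \<notin> visited" "b \<notin> visited"
  shows "a \<in> approached (\<delta> - 1/2) \<or> b \<in> approached (\<delta> - 1/2)"
proof -
  have "pt a b (1/2) \<in> points E"
    using pt_in_points[OF ab] by simp
  then obtain q where q: "q \<in> tour_points E T" "gdist E (pt a b (1/2)) q \<le> \<delta>"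
    using dt unfolding delta_tour_def by blast
  obtain j u v l m t where j: "j < z" and oe: "on_edge E (T ! j) (T ! Suc j) u v l m"
    and t: "min l m \<le> t" "t \<le> max l m" and q_eq: "q = pt u v t"
    using q(1) by (rule tour_point_on_step)
  have uv: "{u, v} \<in> E" "u \<noteq> v" and t01: "0 \<le> t" "t \<le> 1"
    using oe t edge_endpoints(1)[OF simple] unfolding on_edge_def by auto
  have pot: "mid_potential_on a b u v t \<le> \<delta>"
    using mid_potential_le_gdist[OF simple conn ab uv(1) t01] q q_eq by simp
  have "{u, v} \<noteq> {a, b}"
    using step_edge_visited[OF j oe] unvisited by (auto simp: doubleton_eq_iff)
  show ?thesis
  proof (cases "u \<in> {a, b}")
    case True
    then have "t \<le> \<delta> - 1/2"
      using pot \<open>{u, v} \<noteq> {a, b}\<close> unfolding mid_potential_on_def by auto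
    then have "u \<in> approached (\<delta> - 1/2)"
      using unvisited_end_approached[OF j oe t] True unvisited by auto
    then show ?thesis
      using True by auto
  next
    case False
    then have "v \<in> {a, b}" "1 - t \<le> \<delta> - 1/2"
      using pot \<delta> \<open>{u, v} \<noteq> {a, b}\<close> unfolding mid_potential_on_def by (auto split: if_splits)
    moreover have "min (1 - l) (1 - m) \<le> 1 - t" "1 - t \<le> max (1 - l) (1 - m)"
      using t by auto
    ultimately have "v \<in> approached (\<delta> - 1/2)"
      using unvisited_end_approached[OF j on_edge_swap[OF oe uv(2)]] unvisited by auto
    then show ?thesis
      using \<open>v \<in> {a, b}\<close> by auto
  qed
qed

lemma vertex_cover_visited_approached:
  assumes "delta_tour E \<delta> T" "connected_graph V E" "\<delta> < 3/2"
  shows "vertex_cover V E (visited \<union> approached (\<delta> - 1/2))"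
  unfolding vertex_cover_def
proof (intro conjI ballI)
  show "visited \<union> approached (\<delta> - 1/2) \<subseteq> V"
    using visited_subset approached_subset by blast
next
  fix e assume e: "e \<in> E"
  then obtain a b where "e = {a, b}"
    using simple unfolding simple_graph_def by blast
  with e have ab: "e = {a, b}" "{a, b} \<in> E"
    by simp_all
  show "e \<inter> (visited \<union> approached (\<delta> - 1/2)) \<noteq> {}"
  proof (cases "a \<in> visited \<or> b \<in> visited")
    case True
    then show ?thesis
      using ab(1) by blast
  next
    case False
    then show ?thesis
      using ab edge_meets_approached[OF assms, of a b] by blast
  qed
qed

end

theorem mainTheorem18:
  fixes V :: "'a::linorder set" and E :: "'a set set" and \<delta> :: real and T :: "'a point list"
  assumes "simple_graph V E"
    and "connected_graph V E"
    and "0 < \<delta>" and "\<delta> < 3/2"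
    and "shortest_delta_tour E \<delta> T"
    and "nice E T"
    and "card (set T) \<ge> 3"
  shows "\<exists>C. vertex_cover V E C \<and> real (card C) \<le> wlen E T / s_delta \<delta> + 1"
proof -
  interpret nice_tour V E T
    using assms(1,6) by unfold_locales
  define X where "X = approached (\<delta> - 1/2)"
  have "delta_tour E \<delta> T"
    using assms(5) unfolding shortest_delta_tour_def by blast
  then have cover: "vertex_cover V E (visited \<union> X)"
    unfolding X_def using vertex_cover_visited_approached assms(2,4) by blast
  have s: "0 < s_delta \<delta>" "s_delta \<delta> \<le> 1" "s_delta \<delta> \<le> 3/2 - \<delta>"
    using s_delta_bounds assms(3,4) by auto
  have "s_delta \<delta> * card vertex_steps \<le> card vertex_steps"
    using s by (simp add: mult_left_le_one_le)
  moreover have "s_delta \<delta> * card X \<le> (3/2 - \<delta>) * card X"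
    using s by (intro mult_right_mono) simp_all
  ultimately have "s_delta \<delta> * (card vertex_steps + card X) \<le> card vertex_steps + card X * (3/2 - \<delta>)"
    by (simp add: distrib_left mult.commute)
  also have "\<dots> \<le> wlen E T"
    using wlen_lower_bound[of "\<delta> - 1/2"] assms(4) unfolding X_def by simp
  finally have "card vertex_steps + card X \<le> wlen E T / s_delta \<delta>"
    using s(1) by (simp add: pos_le_divide_eq mult.commute)
  moreover have "card (visited \<union> X) \<le> card vertex_steps + card X + 1"
    using card_Un_le[of visited X] card_visited_le by linarith
  ultimately show ?thesis
    using cover by (intro exI[of _ "visited \<union> X"]) simp
qed

end
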